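(* Let $V,W$ be complex vector spaces, let $M=(M_1,\dots,M_s)\in\mathrm{Hom}(V,W)^s$, and suppose $\mathrm{rk}(M)\geq s$. Then there is $v\in V$ such that the span $\langle M_1v,\dots,M_sv\rangle\subseteq W$ has dimension $s$.
   Context: Rank of a tuple: for vector spaces $V,W$ and $M=(M_1,\dots,M_s)\in\mathrm{Hom}(V,W)^s$, $\mathrm{rk}(M)$ is the infimum of $\mathrm{rk}(\sum_i\lambda_iM_i)\in\mathbb{Z}_{\ge0}\cup\{\infty\}$ over all nonzero $(\lambda_1,\dots,\lambda_s)\in\mathbb{C}^s$ (so $\mathrm{rk}(M)=\infty$ if $s=0$). *)

theory Defs
  imports "HOL-Library.Extended_Nat" Main
begin

definition map_rank :: "(complex \<Rightarrow> 'w::ab_group_add \<Rightarrow> 'w) \<Rightarrow> ('v \<Rightarrow> 'w) \<Rightarrow> enat" where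
  "map_rank sW f = (SUP B \<in> {B. finite B \<and> B \<subseteq> range f \<and> \<not> module.dependent sW B}. enat (card B))"

text \<open>Rank of a tuple M = (M 0, ..., M (s-1)): infimum over nonzero coefficient
  vectors \<lambda> \<in> C^s of the rank of \<Sum> \<lambda>_i M_i (equal to \<infinity> when s = 0).\<close>
definition tuple_rank :: "(complex \<Rightarrow> 'w::ab_group_add \<Rightarrow> 'w) \<Rightarrow> nat \<Rightarrow> (nat \<Rightarrow> 'v \<Rightarrow> 'w) \<Rightarrow> enat" where
  "tuple_rank sW s M =
     (INF c \<in> {c::nat \<Rightarrow> complex. \<exists>i<s. c i \<noteq> 0}.
        map_rank sW (\<lambda>x. \<Sum>i<s. sW (c i) (M i x)))"

end

theory Submission
  imports Defs
begin

text \<open>Pick v maximising d(v), the dimension of the span of M_1 v, ..., M_s v, and suppose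
  d(v) < s. Then some nontrivial combination L of the M_i kills v, and since L has rank at least
  s > d(v) there is w with L w outside that span. Along the line v + t w, a basis of the span
  together with L w deforms into a pencil a + t b with a independent. Such a pencil is dependent
  for only finitely many t, because every such t yields an eigenvalue -1/t of the map a_i to b_i
  on the finite-dimensional span of the a_i. Hence d(v + t w) > d(v) for a suitable t,
  contradicting maximality.\<close>

text \<open>Unlike \<open>independent (x ` I)\<close>, independence of a family also excludes repeated vectors.\<close>

definition independent_family :: "('a::zero \<Rightarrow> 'b::ab_group_add \<Rightarrow> 'b) \<Rightarrow> 'i set \<Rightarrow> ('i \<Rightarrow> 'b) \<Rightarrow> bool" where
  "independent_family scale I x \<longleftrightarrow> (\<forall>c. (\<Sum>i\<in>I. scale (c i) (x i)) = 0 \<longrightarrow> (\<forall>i\<in>I. c i = 0))"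

lemma independent_familyD:
  "independent_family scale I x \<Longrightarrow> (\<Sum>i\<in>I. scale (c i) (x i)) = 0 \<Longrightarrow> i \<in> I \<Longrightarrow> c i = 0"
  unfolding independent_family_def by blast

context vector_space begin

lemma independent_family_imp_inj_on:
  assumes "independent_family scale I x" "finite I"
  shows "inj_on x I"
proof (rule inj_onI, rule ccontr)
  fix i j assume ij: "i \<in> I" "j \<in> I" "x i = x j" "i \<noteq> j"
  define c where "c k = (if k = i then 1 else if k = j then -1 else (0::'a))" for k
  have "(\<Sum>k\<in>I. c k *s x k) = (\<Sum>k\<in>{i,j}. c k *s x k)"
    using ij assms(2) by (intro sum.mono_neutral_right) (auto simp: c_def)
  also have "\<dots> = 0" using ij by (simp add: c_def)
  finally have "c i = 0" using independent_familyD[OF assms(1)] ij by blast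
  then show False by (simp add: c_def)
qed

lemma independent_family_iff:
  assumes "finite I"
  shows "independent_family scale I x \<longleftrightarrow> inj_on x I \<and> independent (x ` I)"
proof
  assume fam: "independent_family scale I x"
  then have inj: "inj_on x I" using independent_family_imp_inj_on assms by blast
  have "\<not> dependent (x ` I)"
  proof
    assume "dependent (x ` I)"
    then obtain u where u: "\<exists>v\<in>x ` I. u v \<noteq> 0" "(\<Sum>v\<in>x ` I. u v *s v) = 0"
      unfolding dependent_finite[OF finite_imageI[OF assms]] by blast
    then have "(\<Sum>i\<in>I. u (x i) *s x i) = 0" by (simp add: sum.reindex[OF inj])
    then show False using u(1) independent_familyD[OF fam, of "\<lambda>i. u (x i)"] by blast
  qed
  with inj show "inj_on x I \<and> independent (x ` I)" by blast
next
  assume "inj_on x I \<and> independent (x ` I)"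
  then have inj: "inj_on x I" and ind: "independent (x ` I)" by blast+
  show "independent_family scale I x"
    unfolding independent_family_def
  proof (intro allI impI ballI)
    fix c i assume c: "(\<Sum>i\<in>I. c i *s x i) = 0" and i: "i \<in> I"
    define u where "u v = c (inv_into I x v)" for v
    have "(\<Sum>v\<in>x ` I. u v *s v) = 0"
      using c by (simp add: sum.reindex[OF inj] u_def inv_into_f_f[OF inj])
    then have "\<forall>v\<in>x ` I. u v = 0"
      using ind unfolding dependent_finite[OF finite_imageI[OF assms]] by blast
    then show "c i = 0" using i by (simp add: u_def inv_into_f_f[OF inj])
  qed
qed

lemma independent_card_le_dim_of_finite:
  assumes "finite S" "independent B" "B \<subseteq> span S"
  shows "card B \<le> dim S"
proof -
  obtain C where C: "C \<subseteq> S" "S \<subseteq> span C" "card C = dim S"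
    by (rule basis_exists) blast
  have "span S \<subseteq> span C" using span_mono[OF C(2)] by (simp only: span_span)
  with assms(3) have "B \<subseteq> span C" by blast
  moreover have "finite C" using C(1) assms(1) finite_subset by blast
  ultimately have "card B \<le> card C" using independent_span_bound[OF _ assms(2)] by blast
  with C(3) show ?thesis by simp
qed

lemma independent_family_card_le_dim:
  assumes "finite I" "finite S" "independent_family scale I x" "x ` I \<subseteq> span S"
  shows "card I \<le> dim S"
proof -
  have "inj_on x I" "independent (x ` I)" using assms(3) unfolding independent_family_iff[OF assms(1)] by blast+
  then have "card I = card (x ` I)" by (simp add: card_image)
  also have "\<dots> \<le> dim S" by (rule independent_card_le_dim_of_finite[OF assms(2) _ assms(4)]) fact
  finally show ?thesis .
qed

lemma eigenvectors_independent_family: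
  assumes T: "Vector_Spaces.linear scale scale T" and "finite E"
    and nonzero: "\<And>\<mu>. \<mu> \<in> E \<Longrightarrow> x \<mu> \<noteq> 0"
    and eigen: "\<And>\<mu>. \<mu> \<in> E \<Longrightarrow> T (x \<mu>) = \<mu> *s x \<mu>"
  shows "independent_family scale E x"
  using \<open>finite E\<close> nonzero eigen
proof (induction E rule: finite_induct)
  case empty
  then show ?case by (simp add: independent_family_def)
next
  case (insert \<nu> E)
  interpret T: Vector_Spaces.linear scale scale T by (fact T)
  have IH: "independent_family scale E x" by (rule insert.IH) (simp_all add: insert.prems)
  show ?case unfolding independent_family_def
  proof (intro allI impI)
    fix d assume d: "(\<Sum>\<mu>\<in>insert \<nu> E. d \<mu> *s x \<mu>) = 0"
    have "T (\<Sum>\<mu>\<in>insert \<nu> E. d \<mu> *s x \<mu>) = (\<Sum>\<mu>\<in>insert \<nu> E. (d \<mu> * \<mu>) *s x \<mu>)"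
      unfolding T.sum T.scale by (rule sum.cong) (simp_all add: insert.prems)
    moreover have "\<nu> *s (\<Sum>\<mu>\<in>insert \<nu> E. d \<mu> *s x \<mu>) = (\<Sum>\<mu>\<in>insert \<nu> E. (d \<mu> * \<nu>) *s x \<mu>)"
      by (simp add: scale_sum_right mult.commute)
    ultimately have "(\<Sum>\<mu>\<in>insert \<nu> E. (d \<mu> * (\<mu> - \<nu>)) *s x \<mu>)
        = T (\<Sum>\<mu>\<in>insert \<nu> E. d \<mu> *s x \<mu>) - \<nu> *s (\<Sum>\<mu>\<in>insert \<nu> E. d \<mu> *s x \<mu>)"
      by (simp add: right_diff_distrib scale_left_diff_distrib sum_subtractf)
    also have "\<dots> = 0" using d by simp
    finally have "(\<Sum>\<mu>\<in>E. (d \<mu> * (\<mu> - \<nu>)) *s x \<mu>) = 0" using insert.hyps by simp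
    then have "d \<mu> = 0" if "\<mu> \<in> E" for \<mu>
      using independent_familyD[OF IH _ that, of "\<lambda>\<mu>. d \<mu> * (\<mu> - \<nu>)"] that insert.hyps
      by auto
    moreover from this have "d \<nu> *s x \<nu> = 0" using d insert.hyps by simp
    then have "d \<nu> = 0" using insert.prems by simp
    ultimately show "\<forall>\<mu>\<in>insert \<nu> E. d \<mu> = 0" by blast
  qed
qed

lemma finite_eigenvalues_in_span:
  assumes T: "Vector_Spaces.linear scale scale T" and "finite S"
  shows "finite {\<mu>. \<exists>x\<in>span S. x \<noteq> 0 \<and> T x = \<mu> *s x}" (is "finite ?Eig")
proof (rule ccontr)
  assume "infinite ?Eig"
  then obtain E where E: "finite E" "card E = Suc (dim S)" "E \<subseteq> ?Eig"
    using infinite_arbitrarily_large by blast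
  define x where "x \<mu> = (SOME x. x \<in> span S \<and> x \<noteq> 0 \<and> T x = \<mu> *s x)" for \<mu>
  have x: "x \<mu> \<in> span S \<and> x \<mu> \<noteq> 0 \<and> T (x \<mu>) = \<mu> *s x \<mu>" if "\<mu> \<in> E" for \<mu>
    unfolding x_def by (rule someI_ex) (use E(3) that in blast)
  have "independent_family scale E x"
    by (rule eigenvectors_independent_family[OF T E(1)]) (simp_all add: x)
  then have "card E \<le> dim S"
    using x by (intro independent_family_card_le_dim[OF E(1) \<open>finite S\<close>]) auto
  with E(2) show False by simp
qed

lemma finite_singular_pencil:
  assumes I: "finite I" and a: "independent_family scale I a"
  shows "finite {t. \<not> independent_family scale I (\<lambda>i. a i + t *s b i)}"
proof -
  interpret P: vector_space_pair scale scale ..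
  have inj: "inj_on a I" and ind: "independent (a ` I)"
    using a unfolding independent_family_iff[OF I] by blast+
  txt \<open>T sends a i to b i, so a relation among the a i + t b i turns the corresponding
    combination of the a i into an eigenvector of T with eigenvalue -1/t.\<close>
  define T where "T = P.construct (a ` I) (\<lambda>v. b (inv_into I a v))"
  have T: "Vector_Spaces.linear scale scale T"
    unfolding T_def by (rule P.linear_construct[OF ind])
  interpret T: Vector_Spaces.linear scale scale T by (fact T)
  have T_comb: "T (\<Sum>i\<in>I. c i *s a i) = (\<Sum>i\<in>I. c i *s b i)" for c
    unfolding T.sum T.scale
    by (rule sum.cong) (simp_all add: T_def P.construct_basis[OF ind] inv_into_f_f[OF inj])
  let ?Eig = "{\<mu>. \<exists>x\<in>span (a ` I). x \<noteq> 0 \<and> T x = \<mu> *s x}"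
  have "{t. \<not> independent_family scale I (\<lambda>i. a i + t *s b i)} \<subseteq> (\<lambda>\<mu>. - inverse \<mu>) ` ?Eig"
  proof
    fix t assume "t \<in> {t. \<not> independent_family scale I (\<lambda>i. a i + t *s b i)}"
    then obtain c i where c: "(\<Sum>i\<in>I. c i *s (a i + t *s b i)) = 0" and i: "i \<in> I" "c i \<noteq> 0"
      unfolding independent_family_def by blast
    define x where "x = (\<Sum>i\<in>I. c i *s a i)"
    have "x \<noteq> 0" using independent_familyD[OF a _ i(1)] i(2) unfolding x_def by blast
    have "x \<in> span (a ` I)"
      unfolding x_def by (intro span_sum span_scale span_base) simp
    have "(\<Sum>i\<in>I. c i *s (a i + t *s b i)) = x + t *s T x"
      by (simp add: x_def T_comb scale_right_distrib sum.distrib scale_sum_right mult.commute)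
    with c have x_eq: "t *s T x = - x" by (simp add: add_eq_0_iff)
    have "t \<noteq> 0" using x_eq \<open>x \<noteq> 0\<close> by auto
    have "T x = inverse t *s (t *s T x)" using \<open>t \<noteq> 0\<close> by simp
    also have "\<dots> = (- inverse t) *s x" using x_eq by simp
    finally have "- inverse t \<in> ?Eig" using \<open>x \<noteq> 0\<close> \<open>x \<in> span (a ` I)\<close> by blast
    then show "t \<in> (\<lambda>\<mu>. - inverse \<mu>) ` ?Eig" by (rule rev_image_eqI) simp
  qed
  moreover have "finite ?Eig" by (rule finite_eigenvalues_in_span[OF T finite_imageI[OF I]])
  ultimately show ?thesis by (rule finite_subset[OF _ finite_imageI])
qed

lemma dim_increases_along_generic_line:
  assumes "infinite (UNIV :: 'a set)" and I: "finite I"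
    and p: "(\<Sum>i\<in>I. c i *s p i) = 0" and q: "(\<Sum>i\<in>I. c i *s q i) \<notin> span (p ` I)"
  shows "\<exists>t. dim (p ` I) < dim ((\<lambda>i. p i + t *s q i) ` I)"
proof -
  define z where "z = (\<Sum>i\<in>I. c i *s q i)"
  obtain B where B: "B \<subseteq> p ` I" "independent B" "p ` I \<subseteq> span B" "card B = dim (p ` I)"
    by (rule basis_exists)
  obtain J where J: "J \<subseteq> I" "inj_on p J" "p ` J = B"
    using B(1) unfolding subset_image_inj by blast
  have "finite J" using J(1) I finite_subset by blast
  txt \<open>Index None carries z, which on the line is recovered only as t z, a combination
    of the vectors p i + t q i; hence t must be nonzero.\<close>
  define K where "K = insert None (Some ` J)"
  define a where "a k = (case k of None \<Rightarrow> z | Some j \<Rightarrow> p j)" for k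
  define b where "b k = (case k of None \<Rightarrow> 0 | Some j \<Rightarrow> q j)" for k
  have K: "finite K" "card K = Suc (dim (p ` I))"
    using \<open>finite J\<close> J(2,3) B(4) by (auto simp: K_def card_image inj_on_def)
  have "z \<notin> span B" using q span_mono[OF B(1)] unfolding z_def by blast
  then have "z \<notin> B" using span_superset by blast
  have "a ` K = insert z B" using J(3) by (simp add: K_def a_def image_image)
  moreover have "inj_on a K" using J(2,3) \<open>z \<notin> B\<close> by (auto simp: K_def a_def inj_on_def)
  ultimately have "independent_family scale K a" using \<open>z \<notin> span B\<close> B(2)
    by (simp add: independent_family_iff[OF K(1)] independent_insertI)
  then have "finite (insert 0 {t. \<not> independent_family scale K (\<lambda>k. a k + t *s b k)})"
    using finite_singular_pencil[OF K(1)] by blast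
  then obtain t where "t \<noteq> 0" and t: "independent_family scale K (\<lambda>k. a k + t *s b k)"
    using ex_new_if_finite[OF assms(1)] by blast
  let ?F = "(\<lambda>i. p i + t *s q i) ` I"
  have "t *s z \<in> span ?F"
  proof -
    have "t *s z = (\<Sum>i\<in>I. c i *s (p i + t *s q i))"
      using p by (simp add: z_def scale_right_distrib sum.distrib scale_sum_right mult.commute)
    also have "\<dots> \<in> span ?F" by (intro span_sum span_scale span_base) simp
    finally show ?thesis .
  qed
  then have "z \<in> span ?F" using span_scale[of "t *s z" ?F "inverse t"] \<open>t \<noteq> 0\<close> by simp
  then have "(\<lambda>k. a k + t *s b k) ` K \<subseteq> span ?F"
    using J(1) by (auto simp: K_def a_def b_def intro!: span_base)
  then have "card K \<le> dim ?F"
    using independent_family_card_le_dim[OF K(1) _ t] I by blast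
  with K(2) have "dim (p ` I) < dim ?F" by simp
  then show ?thesis by blast
qed

end

lemma map_rank_le_dim:
  fixes scale :: "complex \<Rightarrow> 'b::ab_group_add \<Rightarrow> 'b"
  assumes "vector_space scale" "finite S" "range f \<subseteq> module.span scale S"
  shows "map_rank scale f \<le> enat (vector_space.dim scale S)"
proof -
  interpret vector_space scale by fact
  show ?thesis
    unfolding map_rank_def
  proof (rule SUP_least)
    fix B assume "B \<in> {B. finite B \<and> B \<subseteq> range f \<and> \<not> dependent B}"
    then have "card B \<le> dim S" using assms(2,3) by (intro independent_card_le_dim_of_finite) auto
    then show "enat (card B) \<le> enat (dim S)" by simp
  qed
qed

lemma tuple_rank_le_map_rank:
  assumes "\<exists>i<s. c i \<noteq> 0"
  shows "tuple_rank sW s M \<le> map_rank sW (\<lambda>x. \<Sum>i<s. sW (c i) (M i x))"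
  unfolding tuple_rank_def by (rule INF_lower) (simp add: assms)

lemma dim_evaluations_le:
  assumes "vector_space sW"
  shows "vector_space.dim sW ((\<lambda>i. M i v) ` {..<s}) \<le> s"
proof -
  interpret W: vector_space sW by fact
  have "W.dim ((\<lambda>i. M i v) ` {..<s}) \<le> card ((\<lambda>i. M i v) ` {..<s})"
    by (rule W.dim_le_card[OF W.span_superset]) simp
  also have "\<dots> \<le> s" using card_image_le[of "{..<s}"] by simp
  finally show ?thesis .
qed

lemma dim_evaluations_increases:
  fixes sV :: "complex \<Rightarrow> 'v::ab_group_add \<Rightarrow> 'v"
    and sW :: "complex \<Rightarrow> 'w::ab_group_add \<Rightarrow> 'w"
  assumes "vector_space sW"
    and lin: "\<forall>i<s. Vector_Spaces.linear sV sW (M i)"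
    and rank: "tuple_rank sW s M \<ge> enat s"
    and less: "vector_space.dim sW ((\<lambda>i. M i v) ` {..<s}) < s"
  shows "\<exists>v'. vector_space.dim sW ((\<lambda>i. M i v) ` {..<s})
              < vector_space.dim sW ((\<lambda>i. M i v') ` {..<s})"
proof -
  interpret W: vector_space sW by fact
  define F where "F v = (\<lambda>i. M i v) ` {..<s}" for v
  have "\<not> independent_family sW {..<s} (\<lambda>i. M i v)"
  proof
    assume "independent_family sW {..<s} (\<lambda>i. M i v)"
    then have "card {..<s} \<le> W.dim (F v)"
      by (rule W.independent_family_card_le_dim[OF finite_lessThan, rotated])
        (simp_all add: F_def W.span_superset)
    with less show False by (simp add: F_def)
  qed
  then obtain c where c: "(\<Sum>i<s. sW (c i) (M i v)) = 0" "\<exists>i<s. c i \<noteq> 0"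
    unfolding independent_family_def by auto
  let ?L = "\<lambda>x. \<Sum>i<s. sW (c i) (M i x)"
  have "\<not> range ?L \<subseteq> W.span (F v)"
  proof
    assume "range ?L \<subseteq> W.span (F v)"
    have "enat s \<le> map_rank sW ?L"
      using rank tuple_rank_le_map_rank[OF c(2)] by (rule order_trans)
    also have "\<dots> \<le> enat (W.dim (F v))"
      using \<open>range ?L \<subseteq> W.span (F v)\<close> by (intro map_rank_le_dim[OF assms(1)]) (simp_all add: F_def)
    finally show False using less by (simp add: F_def)
  qed
  then obtain w where "?L w \<notin> W.span (F v)" by blast
  then obtain t where t: "W.dim (F v) < W.dim ((\<lambda>i. M i v + sW t (M i w)) ` {..<s})"
    using W.dim_increases_along_generic_line[OF infinite_UNIV_char_0 finite_lessThan c(1), of "\<lambda>i. M i w"]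
    unfolding F_def by blast
  have "M i (v + sV t w) = M i v + sW t (M i w)" if "i < s" for i
  proof -
    interpret Vector_Spaces.linear sV sW "M i" using lin that by blast
    show ?thesis by (simp add: add scale)
  qed
  then have "(\<lambda>i. M i v + sW t (M i w)) ` {..<s} = F (v + sV t w)"
    unfolding F_def by (intro image_cong) simp_all
  with t show ?thesis unfolding F_def by auto
qed

theorem lemma3p5:
  fixes sV :: "complex \<Rightarrow> 'v::ab_group_add \<Rightarrow> 'v"
    and sW :: "complex \<Rightarrow> 'w::ab_group_add \<Rightarrow> 'w"
    and s :: nat
    and M :: "nat \<Rightarrow> 'v \<Rightarrow> 'w"
  assumes "vector_space sV"
    and "vector_space sW"
    and "\<forall>i<s. Vector_Spaces.linear sV sW (M i)"
    and "tuple_rank sW s M \<ge> enat s"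
  shows "\<exists>v. vector_space.dim sW ((\<lambda>i. M i v) ` {..<s}) = s"
proof -
  let ?d = "\<lambda>v. vector_space.dim sW ((\<lambda>i. M i v) ` {..<s})"
  have "\<forall>v. ?d v < Suc s" by (simp add: less_Suc_eq_le dim_evaluations_le[OF assms(2)])
  then obtain v where v: "\<And>v'. ?d v' \<le> ?d v"
    using ex_has_greatest_nat[of "\<lambda>_. True" undefined ?d "Suc s"] by blast
  have "\<not> ?d v < s"
    using dim_evaluations_increases[OF assms(2-4)] v leD by blast
  with dim_evaluations_le[OF assms(2), of M v s] have "?d v = s" by simp
  then show ?thesis by blast
qed

end
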